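(* If $\mathcal E$ is a cofull right functional $A$-module, then the ring $\mathcal K_A(\mathcal E)$ is quadratik and is an essential ideal in itself, i.e. the map $\mathcal K_A(\mathcal E)\to\mathrm{Hom}_{\mathcal K_A(\mathcal E)}(\mathcal K_A(\mathcal E))$, $x\mapsto(y\mapsto xy)$, is injective.
   Context: $G$ is a discrete group; $(A,\alpha)$ is an associative ring (not necessarily commutative or unital) with $G$-action. A ring $R$ is quadratik if every element of $R$ is a finite sum of products $ab$ with $a,b\in R$. A right functional $A$-module is a right $A$-module $\mathcal E$ with a $G$-action $S$ by additive bijections with $S_g(\xi a)=S_g(\xi)\alpha_g(a)$, together with a functional space $\Theta_A(\mathcal E)\subseteq\mathrm{Hom}_A(\mathcal E,A)$ which is a $G$-invariant left $A$-submodule. The compact operators $\mathcal K_A(\mathcal E)$ form the ring of finite sums of operators $\theta_{\eta,\varphi}(\xi)=\eta\varphi(\xi)$ ($\eta\in\mathcal E$, $\varphi\in\Theta_A(\mathcal E)$) under composition. $\mathcal E$ is cofull if every element of $\mathcal E$ is a finite sum of elements $\xi\varphi(\eta)$ with $\xi,\eta\in\mathcal E$, $\varphi\in\Theta_A(\mathcal E)$. *)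

theory Defs
  imports "HOL-Algebra.Group"
begin

text \<open>A (not necessarily commutative or unital) ring A is modelled by a type of class
  ring (HOL's class ring has no unit).\<close>

definition ring_action :: "('g, 'b) monoid_scheme \<Rightarrow> ('g \<Rightarrow> 'a::ring \<Rightarrow> 'a) \<Rightarrow> bool" where
  "ring_action G \<alpha> \<longleftrightarrow>
     (\<forall>g\<in>carrier G. bij (\<alpha> g) \<and> (\<forall>a b. \<alpha> g (a + b) = \<alpha> g a + \<alpha> g b)
                       \<and> (\<forall>a b. \<alpha> g (a * b) = \<alpha> g a * \<alpha> g b)) \<and>
     \<alpha> \<one>\<^bsub>G\<^esub> = id \<and>
     (\<forall>g\<in>carrier G. \<forall>h\<in>carrier G. \<alpha> (g \<otimes>\<^bsub>G\<^esub> h) = \<alpha> g \<circ> \<alpha> h)"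

definition right_module :: "('e::ab_group_add \<Rightarrow> 'a::ring \<Rightarrow> 'e) \<Rightarrow> bool" where
  "right_module smul \<longleftrightarrow>
     (\<forall>\<xi> \<eta> a. smul (\<xi> + \<eta>) a = smul \<xi> a + smul \<eta> a) \<and>
     (\<forall>\<xi> a b. smul \<xi> (a + b) = smul \<xi> a + smul \<xi> b) \<and>
     (\<forall>\<xi> a b. smul \<xi> (a * b) = smul (smul \<xi> a) b)"

definition module_hom :: "('e::ab_group_add \<Rightarrow> 'a::ring \<Rightarrow> 'e) \<Rightarrow> ('e \<Rightarrow> 'a) \<Rightarrow> bool" where
  "module_hom smul \<phi> \<longleftrightarrow>
     (\<forall>\<xi> \<eta>. \<phi> (\<xi> + \<eta>) = \<phi> \<xi> + \<phi> \<eta>) \<and> (\<forall>\<xi> a. \<phi> (smul \<xi> a) = \<phi> \<xi> * a)"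

text \<open>G acts on Hom_A(E,A) by (g . phi)(xi) = alpha_g(phi(S_{g^-1} xi)).\<close>
definition right_functional_module ::
  "('g, 'b) monoid_scheme \<Rightarrow> ('g \<Rightarrow> 'a::ring \<Rightarrow> 'a) \<Rightarrow> ('e::ab_group_add \<Rightarrow> 'a \<Rightarrow> 'e)
   \<Rightarrow> ('g \<Rightarrow> 'e \<Rightarrow> 'e) \<Rightarrow> ('e \<Rightarrow> 'a) set \<Rightarrow> bool" where
  "right_functional_module G \<alpha> smul S \<Theta> \<longleftrightarrow>
     right_module smul \<and>
     (\<forall>g\<in>carrier G. bij (S g) \<and> (\<forall>\<xi> \<eta>. S g (\<xi> + \<eta>) = S g \<xi> + S g \<eta>)
                       \<and> (\<forall>\<xi> a. S g (smul \<xi> a) = smul (S g \<xi>) (\<alpha> g a))) \<and>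
     S \<one>\<^bsub>G\<^esub> = id \<and>
     (\<forall>g\<in>carrier G. \<forall>h\<in>carrier G. S (g \<otimes>\<^bsub>G\<^esub> h) = S g \<circ> S h) \<and>
     (\<forall>\<phi>\<in>\<Theta>. module_hom smul \<phi>) \<and>
     (\<lambda>\<xi>. 0) \<in> \<Theta> \<and>
     (\<forall>\<phi>\<in>\<Theta>. \<forall>\<psi>\<in>\<Theta>. (\<lambda>\<xi>. \<phi> \<xi> + \<psi> \<xi>) \<in> \<Theta>) \<and>
     (\<forall>\<phi>\<in>\<Theta>. (\<lambda>\<xi>. - \<phi> \<xi>) \<in> \<Theta>) \<and>
     (\<forall>\<phi>\<in>\<Theta>. \<forall>a. (\<lambda>\<xi>. a * \<phi> \<xi>) \<in> \<Theta>) \<and>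
     (\<forall>g\<in>carrier G. \<forall>\<phi>\<in>\<Theta>. (\<lambda>\<xi>. \<alpha> g (\<phi> (S (inv\<^bsub>G\<^esub> g) \<xi>))) \<in> \<Theta>)"

definition compact_ops :: "('e::ab_group_add \<Rightarrow> 'a \<Rightarrow> 'e) \<Rightarrow> ('e \<Rightarrow> 'a) set \<Rightarrow> ('e \<Rightarrow> 'e) set" where
  "compact_ops smul \<Theta> =
     {T. \<exists>ps :: ('e \<times> ('e \<Rightarrow> 'a)) list. (\<forall>p\<in>set ps. snd p \<in> \<Theta>) \<and>
          T = (\<lambda>\<xi>. sum_list (map (\<lambda>(\<eta>, \<phi>). smul \<eta> (\<phi> \<xi>)) ps))}"

definition cofull :: "('e::ab_group_add \<Rightarrow> 'a \<Rightarrow> 'e) \<Rightarrow> ('e \<Rightarrow> 'a) set \<Rightarrow> bool" where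
  "cofull smul \<Theta> \<longleftrightarrow>
     (\<forall>x. \<exists>ps :: ('e \<times> 'e \<times> ('e \<Rightarrow> 'a)) list. (\<forall>p\<in>set ps. snd (snd p) \<in> \<Theta>) \<and>
          x = sum_list (map (\<lambda>(\<xi>, \<eta>, \<phi>). smul \<xi> (\<phi> \<eta>)) ps))"

text \<open>Quadratik for the operator ring K (addition pointwise, product = composition):
  every element is a finite sum of products of elements of K.\<close>
definition quadratik_ops :: "('e::ab_group_add \<Rightarrow> 'e) set \<Rightarrow> bool" where
  "quadratik_ops K \<longleftrightarrow>
     (\<forall>T\<in>K. \<exists>ps :: (('e \<Rightarrow> 'e) \<times> ('e \<Rightarrow> 'e)) list. (\<forall>p\<in>set ps. fst p \<in> K \<and> snd p \<in> K) \<and>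
          T = (\<lambda>\<xi>. sum_list (map (\<lambda>(U, V). U (V \<xi>)) ps)))"

end

theory Submission
  imports Defs
begin

text \<open>Write \<theta>(\<eta>, \<phi>) for the operator \<xi> \<mapsto> \<eta> \<phi>(\<xi>). Linearity of a functional \<psi> gives
  \<theta>(a, \<psi>) \<circ> \<theta>(z, \<phi>) = \<theta>(a \<psi>(z), \<phi>), and cofullness writes every \<eta> as a sum of terms a \<psi>(z).
  As \<theta>(\<eta>, \<phi>) is additive in \<eta>, every generator \<theta>(\<eta>, \<phi>) of the compact operators, and hence
  every compact operator, is a sum of products of compact operators. Conversely, if x \<circ> y = x' \<circ> y
  for all compact y, then x and x' agree on every \<theta>(a, \<psi>)(z) = a \<psi>(z); by cofullness and
  additivity they agree everywhere.\<close>

lemma sum_list_map_additive: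
  fixes f :: "'a::ab_group_add \<Rightarrow> 'b::ab_group_add"
  assumes add: "\<And>x y. f (x + y) = f x + f y"
  shows "f (sum_list (map g xs)) = sum_list (map (\<lambda>x. f (g x)) xs)"
proof -
  have "f 0 = 0"
    using add[of 0 0] by simp
  then show ?thesis
    by (induction xs) (simp_all add: add)
qed

definition theta_op :: "('e::ab_group_add \<Rightarrow> 'a \<Rightarrow> 'e) \<Rightarrow> 'e \<Rightarrow> ('e \<Rightarrow> 'a) \<Rightarrow> 'e \<Rightarrow> 'e" where
  "theta_op smul \<eta> \<phi> = (\<lambda>\<xi>. smul \<eta> (\<phi> \<xi>))"

lemma theta_op_in_compact_ops:
  assumes "\<phi> \<in> \<Theta>"
  shows "theta_op smul \<eta> \<phi> \<in> compact_ops smul \<Theta>"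
  unfolding compact_ops_def theta_op_def
  using assms by (intro CollectI exI[of _ "[(\<eta>, \<phi>)]"]) simp

lemma theta_op_add:
  assumes "right_module smul" and "module_hom smul \<phi>"
  shows "theta_op smul \<eta> \<phi> (x + y) = theta_op smul \<eta> \<phi> x + theta_op smul \<eta> \<phi> y"
  using assms unfolding theta_op_def right_module_def module_hom_def by simp

lemma compact_opsE:
  assumes "T \<in> compact_ops smul \<Theta>"
  obtains ps where "\<forall>p\<in>set ps. snd p \<in> \<Theta>"
    and "T = (\<lambda>\<xi>. sum_list (map (\<lambda>p. theta_op smul (fst p) (snd p) \<xi>) ps))"
  using assms unfolding compact_ops_def theta_op_def by (auto simp: split_def)

lemma compact_ops_add:
  assumes "right_module smul" and "\<forall>\<phi>\<in>\<Theta>. module_hom smul \<phi>"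
    and "T \<in> compact_ops smul \<Theta>"
  shows "T (x + y) = T x + T y"
proof -
  obtain ps where ps: "\<forall>p\<in>set ps. snd p \<in> \<Theta>"
    and T: "T = (\<lambda>\<xi>. sum_list (map (\<lambda>p. theta_op smul (fst p) (snd p) \<xi>) ps))"
    using assms(3) by (rule compact_opsE)
  have "theta_op smul (fst p) (snd p) (x + y)
        = theta_op smul (fst p) (snd p) x + theta_op smul (fst p) (snd p) y"
    if "p \<in> set ps" for p
    using that ps assms(2) theta_op_add[OF assms(1)] by auto
  then show ?thesis
    unfolding T by (simp cong: map_cong add: sum_list_addf)
qed

lemma theta_op_comp:
  assumes "right_module smul" and "module_hom smul \<psi>"
  shows "theta_op smul a \<psi> \<circ> theta_op smul z \<phi> = theta_op smul (smul a (\<psi> z)) \<phi>"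
  using assms unfolding theta_op_def right_module_def module_hom_def by auto

lemma theta_op_sum_list_left:
  assumes "right_module smul"
  shows "theta_op smul (sum_list (map f xs)) \<phi>
           = (\<lambda>\<xi>. sum_list (map (\<lambda>x. theta_op smul (f x) \<phi> \<xi>) xs))"
proof -
  have "smul (sum_list (map f xs)) a = sum_list (map (\<lambda>x. smul (f x) a) xs)" for a
    by (rule sum_list_map_additive) (use assms in \<open>simp add: right_module_def\<close>)
  then show ?thesis
    unfolding theta_op_def by simp
qed

definition sums_of_products :: "('e::ab_group_add \<Rightarrow> 'e) set \<Rightarrow> ('e \<Rightarrow> 'e) set" where
  "sums_of_products K =
     {T. \<exists>ps. (\<forall>p\<in>set ps. fst p \<in> K \<and> snd p \<in> K) \<and>
           T = (\<lambda>\<xi>. sum_list (map (\<lambda>(U, V). U (V \<xi>)) ps))}"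

lemma quadratik_ops_iff_subset_sums_of_products:
  "quadratik_ops K \<longleftrightarrow> K \<subseteq> sums_of_products K"
  unfolding quadratik_ops_def sums_of_products_def by blast

lemma comp_in_sums_of_products:
  assumes "U \<in> K" and "V \<in> K"
  shows "U \<circ> V \<in> sums_of_products K"
  unfolding sums_of_products_def
  using assms by (intro CollectI exI[of _ "[(U, V)]"]) auto

lemma sum_list_in_sums_of_products:
  assumes "\<forall>x\<in>set xs. f x \<in> sums_of_products K"
  shows "(\<lambda>\<xi>. sum_list (map (\<lambda>x. f x \<xi>) xs)) \<in> sums_of_products K"
  using assms
proof (induction xs)
  case Nil
  show ?case
    unfolding sums_of_products_def by (intro CollectI exI[of _ "[]"]) simp
next
  case (Cons x xs)
  obtain ps where ps: "\<forall>p\<in>set ps. fst p \<in> K \<and> snd p \<in> K"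
    and fx: "f x = (\<lambda>\<xi>. sum_list (map (\<lambda>(U, V). U (V \<xi>)) ps))"
    using Cons.prems unfolding sums_of_products_def by auto
  obtain qs where qs: "\<forall>p\<in>set qs. fst p \<in> K \<and> snd p \<in> K"
    and xs: "(\<lambda>\<xi>. sum_list (map (\<lambda>x. f x \<xi>) xs)) = (\<lambda>\<xi>. sum_list (map (\<lambda>(U, V). U (V \<xi>)) qs))"
    using Cons unfolding sums_of_products_def by auto
  have "(\<lambda>\<xi>. sum_list (map (\<lambda>x. f x \<xi>) (x # xs))) = (\<lambda>\<xi>. sum_list (map (\<lambda>(U, V). U (V \<xi>)) (ps @ qs)))"
    using fun_cong[OF xs] by (simp add: fx)
  then show ?case
    unfolding sums_of_products_def using ps qs by (intro CollectI exI[of _ "ps @ qs"]) auto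
qed

lemma theta_op_in_sums_of_products:
  fixes smul :: "'e::ab_group_add \<Rightarrow> 'a::ring \<Rightarrow> 'e"
  assumes rm: "right_module smul" and hom: "\<forall>\<psi>\<in>\<Theta>. module_hom smul \<psi>"
    and cofull: "cofull smul \<Theta>" and "\<phi> \<in> \<Theta>"
  shows "theta_op smul \<eta> \<phi> \<in> sums_of_products (compact_ops smul \<Theta>)"
proof -
  obtain rs :: "('e \<times> 'e \<times> ('e \<Rightarrow> 'a)) list" where rs: "\<forall>r\<in>set rs. snd (snd r) \<in> \<Theta>"
    and \<eta>: "\<eta> = sum_list (map (\<lambda>(a, z, \<psi>). smul a (\<psi> z)) rs)"
    using cofull unfolding cofull_def by blast
  define prod_of where "prod_of = (\<lambda>(a, z, \<psi>). theta_op smul a \<psi> \<circ> theta_op smul z \<phi>)"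
  have "theta_op smul ((\<lambda>(a, z, \<psi>). smul a (\<psi> z)) r) \<phi> = prod_of r" if "r \<in> set rs" for r
    using that rs hom theta_op_comp[OF rm] unfolding prod_of_def by (auto split: prod.split)
  then have "theta_op smul \<eta> \<phi> = (\<lambda>\<xi>. sum_list (map (\<lambda>r. prod_of r \<xi>) rs))"
    unfolding \<eta> theta_op_sum_list_left[OF rm] by (simp cong: map_cong)
  moreover have "\<forall>r\<in>set rs. prod_of r \<in> sums_of_products (compact_ops smul \<Theta>)"
    using rs \<open>\<phi> \<in> \<Theta>\<close> unfolding prod_of_def
    by (auto intro!: comp_in_sums_of_products theta_op_in_compact_ops)
  ultimately show ?thesis
    using sum_list_in_sums_of_products by metis
qed

lemma compact_ops_quadratik:
  assumes "right_module smul" and "\<forall>\<phi>\<in>\<Theta>. module_hom smul \<phi>" and "cofull smul \<Theta>"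
  shows "quadratik_ops (compact_ops smul \<Theta>)"
  unfolding quadratik_ops_iff_subset_sums_of_products
proof
  fix T assume "T \<in> compact_ops smul \<Theta>"
  then obtain ps where ps: "\<forall>p\<in>set ps. snd p \<in> \<Theta>"
    and T: "T = (\<lambda>\<xi>. sum_list (map (\<lambda>p. theta_op smul (fst p) (snd p) \<xi>) ps))"
    by (rule compact_opsE)
  have "\<forall>p\<in>set ps. theta_op smul (fst p) (snd p) \<in> sums_of_products (compact_ops smul \<Theta>)"
    using ps theta_op_in_sums_of_products[OF assms] by auto
  then show "T \<in> sums_of_products (compact_ops smul \<Theta>)"
    unfolding T by (rule sum_list_in_sums_of_products)
qed

lemma additive_eqI_cofull:
  fixes smul :: "'e::ab_group_add \<Rightarrow> 'a \<Rightarrow> 'e" and f f' :: "'e \<Rightarrow> 'b::ab_group_add"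
  assumes cofull: "cofull smul \<Theta>"
    and add: "\<And>\<xi> \<eta>. f (\<xi> + \<eta>) = f \<xi> + f \<eta>" and add': "\<And>\<xi> \<eta>. f' (\<xi> + \<eta>) = f' \<xi> + f' \<eta>"
    and eq: "\<And>a \<psi>. \<psi> \<in> \<Theta> \<Longrightarrow> f \<circ> theta_op smul a \<psi> = f' \<circ> theta_op smul a \<psi>"
  shows "f = f'"
proof
  fix \<xi>
  define vec where "vec = (\<lambda>(a, z, \<psi>). theta_op smul a \<psi> z)"
  obtain rs :: "('e \<times> 'e \<times> ('e \<Rightarrow> 'a)) list" where rs: "\<forall>r\<in>set rs. snd (snd r) \<in> \<Theta>"
    and \<xi>: "\<xi> = sum_list (map vec rs)"
    using cofull unfolding cofull_def theta_op_def vec_def by blast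
  have "f (vec r) = f' (vec r)" if "r \<in> set rs" for r
  proof -
    obtain a z \<psi> where r: "r = (a, z, \<psi>)"
      by (cases r) blast
    then have "f \<circ> theta_op smul a \<psi> = f' \<circ> theta_op smul a \<psi>"
      using that rs eq by auto
    then show ?thesis
      unfolding r vec_def by (simp add: fun_eq_iff)
  qed
  then have "sum_list (map (\<lambda>r. f (vec r)) rs) = sum_list (map (\<lambda>r. f' (vec r)) rs)"
    by (simp cong: map_cong)
  moreover have "f \<xi> = sum_list (map (\<lambda>r. f (vec r)) rs)"
    unfolding \<xi> by (rule sum_list_map_additive[where f = f, OF add])
  moreover have "f' \<xi> = sum_list (map (\<lambda>r. f' (vec r)) rs)"
    unfolding \<xi> by (rule sum_list_map_additive[where f = f', OF add'])
  ultimately show "f \<xi> = f' \<xi>"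
    by simp
qed

lemma compact_ops_left_mult_inj:
  assumes rm: "right_module smul" and hom: "\<forall>\<phi>\<in>\<Theta>. module_hom smul \<phi>"
    and cofull: "cofull smul \<Theta>"
  shows "inj_on (\<lambda>x. restrict (\<lambda>y. x \<circ> y) (compact_ops smul \<Theta>)) (compact_ops smul \<Theta>)"
proof (rule inj_onI)
  fix x x'
  assume x: "x \<in> compact_ops smul \<Theta>" and x': "x' \<in> compact_ops smul \<Theta>"
    and eq: "restrict (\<lambda>y. x \<circ> y) (compact_ops smul \<Theta>) = restrict (\<lambda>y. x' \<circ> y) (compact_ops smul \<Theta>)"
  have comp_eq: "x \<circ> theta_op smul a \<psi> = x' \<circ> theta_op smul a \<psi>" if "\<psi> \<in> \<Theta>" for a \<psi>
    using fun_cong[OF eq, of "theta_op smul a \<psi>"] theta_op_in_compact_ops[OF that] by simp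
  show "x = x'"
    using additive_eqI_cofull[where f = x and f' = x', OF cofull
        compact_ops_add[OF rm hom x] compact_ops_add[OF rm hom x'] comp_eq] .
qed

theorem lemma2p14:
  fixes G :: "('g, 'b) monoid_scheme"
    and \<alpha> :: "'g \<Rightarrow> 'a::ring \<Rightarrow> 'a"
    and smul :: "'e::ab_group_add \<Rightarrow> 'a \<Rightarrow> 'e"
    and S :: "'g \<Rightarrow> 'e \<Rightarrow> 'e"
    and \<Theta> :: "('e \<Rightarrow> 'a) set"
  assumes "group G"
    and "ring_action G \<alpha>"
    and "right_functional_module G \<alpha> smul S \<Theta>"
    and "cofull smul \<Theta>"
  shows "quadratik_ops (compact_ops smul \<Theta>) \<and>
         inj_on (\<lambda>x. restrict (\<lambda>y. x \<circ> y) (compact_ops smul \<Theta>)) (compact_ops smul \<Theta>)"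
proof -
  have rm: "right_module smul" and hom: "\<forall>\<phi>\<in>\<Theta>. module_hom smul \<phi>"
    using assms(3) unfolding right_functional_module_def by auto
  show ?thesis
    using compact_ops_quadratik[OF rm hom assms(4)] compact_ops_left_mult_inj[OF rm hom assms(4)] ..
qed

end
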